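(* Let $X$ be a $3$-long liner. If $X$ is proaffine, then any lines $L,\Lambda$ in $X$ satisfy $|L|\le|\Lambda|+2$. If $X$ is Proclus, then any lines $L,\Lambda$ in $X$ satisfy $|L|\le|\Lambda|+1$.
   Context: A liner is a set $X$ of points with a family of subsets called lines such that any two distinct points lie in a unique line and every line contains at least two points. For distinct $x,y$, $\overline{xy}$ is the line through them and $\overline{xx}:=\{x\}$. A set is flat if it contains $\overline{xy}$ for all its distinct points; $\overline A$ is the smallest flat containing $A$; the rank $\|A\|$ is the smallest cardinality of $B$ with $A\subseteq\overline B$; a plane is a flat of rank 3. $X$ is $3$-long if every line has at least $3$ points. $X$ is proaffine if for all $o,x,y\in X$ and $p\in\overline{xy}\setminus\overline{ox}$ there exists $u\in\overline{oy}$ such that $\overline{vp}\cap\overline{ox}\ne\varnothing$ for every $v\in\overline{oy}\setminus\{u\}$. $X$ is Proclus if for every plane $P$, line $L\subseteq P$ and point $x\in P\setminus L$ there is at most one line $\Lambda$ with $x\in\Lambda\subseteq P\setminus L$. *)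

theory Defs
  imports Main "HOL-Library.Equipollence"
begin

definition liner :: "'a set \<Rightarrow> 'a set set \<Rightarrow> bool" where
  "liner X Ls \<longleftrightarrow>
     (\<forall>L\<in>Ls. L \<subseteq> X \<and> (\<exists>x y. x \<in> L \<and> y \<in> L \<and> x \<noteq> y)) \<and>
     (\<forall>x\<in>X. \<forall>y\<in>X. x \<noteq> y \<longrightarrow> (\<exists>!L. L \<in> Ls \<and> x \<in> L \<and> y \<in> L))"

definition lin :: "'a set set \<Rightarrow> 'a \<Rightarrow> 'a \<Rightarrow> 'a set" where
  "lin Ls x y = (if x = y then {x} else (THE L. L \<in> Ls \<and> x \<in> L \<and> y \<in> L))"

definition flat :: "'a set \<Rightarrow> 'a set set \<Rightarrow> 'a set \<Rightarrow> bool" where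
  "flat X Ls A \<longleftrightarrow> A \<subseteq> X \<and> (\<forall>x\<in>A. \<forall>y\<in>A. x \<noteq> y \<longrightarrow> lin Ls x y \<subseteq> A)"

definition flat_hull :: "'a set \<Rightarrow> 'a set set \<Rightarrow> 'a set \<Rightarrow> 'a set" where
  "flat_hull X Ls A = \<Inter>{F. flat X Ls F \<and> A \<subseteq> F}"

definition rank_le :: "'a set \<Rightarrow> 'a set set \<Rightarrow> 'a set \<Rightarrow> nat \<Rightarrow> bool" where
  "rank_le X Ls A n \<longleftrightarrow> (\<exists>B. B \<subseteq> X \<and> finite B \<and> card B \<le> n \<and> A \<subseteq> flat_hull X Ls B)"

definition plane :: "'a set \<Rightarrow> 'a set set \<Rightarrow> 'a set \<Rightarrow> bool" where
  "plane X Ls P \<longleftrightarrow> flat X Ls P \<and> rank_le X Ls P 3 \<and> \<not> rank_le X Ls P 2"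

definition three_long :: "'a set set \<Rightarrow> bool" where
  "three_long Ls \<longleftrightarrow> (\<forall>L\<in>Ls. \<exists>a b c. a \<in> L \<and> b \<in> L \<and> c \<in> L \<and> a \<noteq> b \<and> a \<noteq> c \<and> b \<noteq> c)"

definition proaffine :: "'a set \<Rightarrow> 'a set set \<Rightarrow> bool" where
  "proaffine X Ls \<longleftrightarrow>
    (\<forall>w\<in>X. \<forall>x\<in>X. \<forall>y\<in>X. \<forall>p \<in> lin Ls x y - lin Ls w x.
       \<exists>u \<in> lin Ls w y. \<forall>v \<in> lin Ls w y - {u}. lin Ls v p \<inter> lin Ls w x \<noteq> {})"

definition proclus :: "'a set \<Rightarrow> 'a set set \<Rightarrow> bool" where
  "proclus X Ls \<longleftrightarrow>
    (\<forall>P L x. plane X Ls P \<and> L \<in> Ls \<and> L \<subseteq> P \<and> x \<in> P - L \<longrightarrow>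
       (\<forall>M1 M2. M1 \<in> Ls \<and> x \<in> M1 \<and> M1 \<subseteq> P - L \<and> M2 \<in> Ls \<and> x \<in> M2 \<and> M2 \<subseteq> P - L
                  \<longrightarrow> M1 = M2))"

end

theory Submission
  imports Defs
begin

(*
  Let L, K be lines meeting in c, and let p be a third point on a line joining a point of L - {c}
  to a point of K - {c}. Sending v \<in> L to the point where the line vp meets K is injective
  wherever it is defined, and it is defined on all of L but at most one point: in a proaffine liner
  by definition, in a Proclus liner because among the lines through p in the plane of L and K at
  most one misses K. Hence |L| \<le> |K| + 1 for meeting lines, and |L| \<le> |K| + 2 for arbitrary lines
  by passing through a transversal.

  For disjoint lines L, K of a Proclus liner this already gives |L| \<le> |K| + 1 when K is infinite.
  When K is finite, pick b \<in> K: the bound via the transversal ba is sharp only if every line ba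
  (a \<in> L) has n = |L| - 1 points. In the plane P of L and b, every line through a point off L then
  meets L, so counting P through pencils gives |P| = 1 + (n + 1)(n - 1) and forces every line
  meeting L in a single point to have exactly n points; counting P once more through the pencil at
  a point of L gives (n + 1)(n - 1) = n + k(n - 1), impossible for n \<ge> 3, i.e. for 3-long lines.
*)

section \<open>Cardinal bounds\<close>

lemma lepoll_Plus: "A \<lesssim> A <+> B"
  unfolding lepoll_def by (rule exI[of _ Inl]) (auto simp: inj_on_def)

lemma lepoll_Plus_unit_if_inj_on_Diff:
  assumes "inj_on f (A - {u})" "f ` (A - {u}) \<subseteq> B"
  shows "A \<lesssim> B <+> (UNIV :: unit set)"
  unfolding lepoll_def
proof (intro exI conjI)
  let ?g = "\<lambda>x. if x = u then Inr () else Inl (f x)"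
  show "inj_on ?g A"
    using assms(1) unfolding inj_on_def by auto
  show "?g ` A \<subseteq> B <+> UNIV"
    using assms(2) by auto
qed

lemma lepoll_Plus_unit_Plus_bool:
  assumes "A \<lesssim> B <+> (UNIV :: unit set)"
  shows "A \<lesssim> B <+> (UNIV :: bool set)"
proof -
  have "(UNIV :: unit set) \<lesssim> (UNIV :: bool set)"
    unfolding lepoll_def by (rule exI[of _ "\<lambda>_. True"]) (simp add: inj_on_def)
  then show ?thesis
    using lepoll_trans[OF assms sum_lepoll_mono[OF lepoll_refl]] by blast
qed

lemma lepoll_Plus_unit_trans:
  assumes "A \<lesssim> B <+> (UNIV :: unit set)" "B \<lesssim> C <+> (UNIV :: unit set)"
  shows "A \<lesssim> C <+> (UNIV :: bool set)"
proof -
  have "A \<lesssim> (C <+> (UNIV :: unit set)) <+> (UNIV :: unit set)"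
    using lepoll_trans[OF assms(1) sum_lepoll_mono[OF assms(2) lepoll_refl]] .
  also have "\<dots> \<lesssim> C <+> (UNIV :: bool set)"
    unfolding lepoll_def
    by (rule exI[of _ "case_sum (case_sum Inl (\<lambda>_. Inr True)) (\<lambda>_. Inr False)"])
      (auto simp: inj_on_def split: sum.splits)
  finally show ?thesis .
qed

lemma infinite_Plus_bool_lepoll_Plus_unit:
  assumes "infinite A"
  shows "A <+> (UNIV :: bool set) \<lesssim> A <+> (UNIV :: unit set)"
proof -
  have inf: "infinite (Inl ` A :: (_ + bool) set)"
    using assms finite_imageD[of Inl A] by (auto simp: inj_on_def)
  have "A <+> (UNIV :: bool set) = insert (Inr True) (insert (Inr False) (Inl ` A))"
    by (auto simp: UNIV_bool)
  also have "\<dots> \<lesssim> insert (Inr False) (Inl ` A)"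
    using inf by (simp add: infinite_insert_lepoll)
  also have "\<dots> \<lesssim> (Inl ` A :: (_ + bool) set)"
    by (rule infinite_insert_lepoll[OF inf])
  also have "\<dots> \<lesssim> A"
    by (rule image_lepoll)
  also have "A \<lesssim> A <+> (UNIV :: unit set)"
    by (rule lepoll_Plus)
  finally show ?thesis .
qed

lemma lepoll_Plus_unit_iff_card:
  assumes "finite B"
  shows "A \<lesssim> B <+> (UNIV :: unit set) \<longleftrightarrow> finite A \<and> card A \<le> card B + 1"
proof -
  have "B <+> (UNIV :: unit set) \<approx> {..<card B + 1}"
    using assms by (simp add: eqpoll_iff_finite_card card_Plus)
  then have "A \<lesssim> B <+> (UNIV :: unit set) \<longleftrightarrow> A \<lesssim> {..<card B + 1}"
    by (meson eqpoll_sym lepoll_trans2)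
  then show ?thesis
    by (simp add: lepoll_iff_finite_card)
qed

section \<open>Lines, flats and planes\<close>

lemma liner_line:
  assumes "liner X Ls" "L \<in> Ls"
  shows "L \<subseteq> X \<and> (\<exists>x y. x \<in> L \<and> y \<in> L \<and> x \<noteq> y)"
  using assms unfolding liner_def by (simp only:)

lemma liner_line_subset: "liner X Ls \<Longrightarrow> L \<in> Ls \<Longrightarrow> L \<subseteq> X"
  using liner_line by blast

lemma liner_ex1_line:
  assumes "liner X Ls" "x \<in> X" "y \<in> X" "x \<noteq> y"
  shows "\<exists>!L. L \<in> Ls \<and> x \<in> L \<and> y \<in> L"
proof -
  have lines: "\<forall>x\<in>X. \<forall>y\<in>X. x \<noteq> y \<longrightarrow> (\<exists>!L. L \<in> Ls \<and> x \<in> L \<and> y \<in> L)"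
    using assms(1) unfolding liner_def by (rule conjunct2)
  show ?thesis
    using lines[rule_format, OF assms(2-4)] .
qed

lemma liner_line_other_point:
  assumes "liner X Ls" "L \<in> Ls"
  obtains y where "y \<in> L" "y \<noteq> x"
proof -
  obtain a b where "a \<in> L" "b \<in> L" "a \<noteq> b"
    using liner_line[OF assms] by blast
  then show ?thesis
    using that by blast
qed

lemma liner_card_line_ge_2:
  assumes "liner X Ls" "L \<in> Ls" "finite L"
  shows "2 \<le> card L"
proof -
  obtain x y where "x \<in> L" "y \<in> L" "x \<noteq> y"
    using liner_line[OF assms(1,2)] by blast
  then show ?thesis
    using card_mono[OF assms(3), of "{x, y}"] by simp
qed

lemma three_long_other_point:
  assumes "three_long Ls" "L \<in> Ls"
  obtains z where "z \<in> L" "z \<noteq> x" "z \<noteq> y"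
proof -
  obtain a b c where "a \<in> L" "b \<in> L" "c \<in> L" "a \<noteq> b" "a \<noteq> c" "b \<noteq> c"
    using assms unfolding three_long_def by blast
  then show ?thesis
    using that by blast
qed

lemma three_long_card:
  assumes "three_long Ls" "L \<in> Ls" "finite L"
  shows "3 \<le> card L"
proof -
  obtain a b c where "{a, b, c} \<subseteq> L" "a \<noteq> b" "a \<noteq> c" "b \<noteq> c"
    using assms(1,2) unfolding three_long_def by blast
  moreover from this have "card {a, b, c} \<le> card L"
    using card_mono[OF assms(3)] by blast
  ultimately show ?thesis
    by simp
qed

lemma liner_line_unique:
  assumes "liner X Ls" "L \<in> Ls" "M \<in> Ls" "x \<in> L" "y \<in> L" "x \<in> M" "y \<in> M" "x \<noteq> y"
  shows "L = M"
proof -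
  have "x \<in> X" "y \<in> X"
    using assms(2,4,5) liner_line_subset[OF assms(1)] by blast+
  then have "\<exists>!L. L \<in> Ls \<and> x \<in> L \<and> y \<in> L"
    using liner_ex1_line[OF assms(1) _ _ assms(8)] by blast
  then show ?thesis
    using assms(2-7) by (metis (no_types, lifting))
qed

lemma lin_refl [simp]: "lin Ls x x = {x}"
  by (simp add: lin_def)

lemma lin_commute: "lin Ls x y = lin Ls y x"
  unfolding lin_def by (cases "x = y") (simp_all add: conj_ac)

lemma lin_line:
  assumes "liner X Ls" "x \<in> X" "y \<in> X" "x \<noteq> y"
  shows "lin Ls x y \<in> Ls \<and> x \<in> lin Ls x y \<and> y \<in> lin Ls x y"
  unfolding lin_def using theI'[OF liner_ex1_line[OF assms]] assms(4) by simp

lemma lin_in_lines: "liner X Ls \<Longrightarrow> x \<in> X \<Longrightarrow> y \<in> X \<Longrightarrow> x \<noteq> y \<Longrightarrow> lin Ls x y \<in> Ls"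
  using lin_line[of X Ls x y] by blast

lemma left_in_lin: "liner X Ls \<Longrightarrow> x \<in> X \<Longrightarrow> y \<in> X \<Longrightarrow> x \<in> lin Ls x y"
  using lin_line[of X Ls x y] by (cases "x = y") auto

lemma right_in_lin: "liner X Ls \<Longrightarrow> x \<in> X \<Longrightarrow> y \<in> X \<Longrightarrow> y \<in> lin Ls x y"
  using lin_line[of X Ls x y] by (cases "x = y") auto

lemma lin_eq_line:
  assumes "liner X Ls" "L \<in> Ls" "x \<in> L" "y \<in> L" "x \<noteq> y"
  shows "lin Ls x y = L"
proof -
  have "x \<in> X" "y \<in> X"
    using assms(2-4) liner_line_subset[OF assms(1)] by blast+
  then have "lin Ls x y \<in> Ls" "x \<in> lin Ls x y" "y \<in> lin Ls x y"
    using lin_line[OF assms(1) _ _ assms(5)] by blast+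
  then show ?thesis
    using liner_line_unique[OF assms(1) _ assms(2) _ _ assms(3-5)] by blast
qed

lemma flat_subset: "flat X Ls F \<Longrightarrow> F \<subseteq> X"
  unfolding flat_def by blast

lemma flat_lin_subset:
  assumes "flat X Ls F" "x \<in> F" "y \<in> F"
  shows "lin Ls x y \<subseteq> F"
proof (cases "x = y")
  case True
  then show ?thesis
    using assms(2) by simp
next
  case False
  then show ?thesis
    using assms unfolding flat_def by blast
qed

lemma flat_lin:
  assumes "liner X Ls" "x \<in> X" "y \<in> X"
  shows "flat X Ls (lin Ls x y)"
proof (cases "x = y")
  case True
  then show ?thesis
    using assms(2) by (simp add: flat_def)
next
  case False
  have "lin Ls x y \<in> Ls"
    using lin_in_lines[OF assms False] .
  then show ?thesis
    unfolding flat_def using liner_line_subset[OF assms(1)] lin_eq_line[OF assms(1)] by simp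
qed

lemma flat_space:
  assumes "liner X Ls"
  shows "flat X Ls X"
  unfolding flat_def
proof (intro conjI ballI impI subset_refl)
  fix x y
  assume "x \<in> X" "y \<in> X" "x \<noteq> y"
  then show "lin Ls x y \<subseteq> X"
    using liner_line_subset[OF assms lin_in_lines[OF assms]] by blast
qed

lemma subset_flat_hull: "A \<subseteq> flat_hull X Ls A"
  unfolding flat_hull_def by blast

lemma flat_hull_least: "flat X Ls F \<Longrightarrow> A \<subseteq> F \<Longrightarrow> flat_hull X Ls A \<subseteq> F"
  unfolding flat_hull_def by blast

lemma flat_hull_empty: "flat_hull X Ls {} = {}"
  using flat_hull_least[of X Ls "{}" "{}"] by (simp add: flat_def)

lemma flat_flat_hull:
  assumes "liner X Ls" "A \<subseteq> X"
  shows "flat X Ls (flat_hull X Ls A)"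
  unfolding flat_def
proof (intro conjI ballI impI)
  show "flat_hull X Ls A \<subseteq> X"
    using flat_hull_least[OF flat_space[OF assms(1)] assms(2)] .
  fix x y
  assume "x \<in> flat_hull X Ls A" "y \<in> flat_hull X Ls A"
  then show "lin Ls x y \<subseteq> flat_hull X Ls A"
    unfolding flat_hull_def using flat_lin_subset[of X Ls _ x y] by blast
qed

lemma flat_hull_card_le_2:
  assumes "liner X Ls" "B \<subseteq> X" "finite B" "card B \<le> 2" "B \<noteq> {}"
  obtains p q where "p \<in> X" "q \<in> X" "flat_hull X Ls B \<subseteq> lin Ls p q"
proof -
  obtain p where p: "p \<in> B"
    using assms(5) by blast
  obtain q where q: "q \<in> B" and pq: "B \<subseteq> {p, q}"
  proof (cases "B \<subseteq> {p}")
    case True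
    then show ?thesis
      using that p by blast
  next
    case False
    then obtain q where q: "q \<in> B" "q \<noteq> p"
      by blast
    have "z \<in> {p, q}" if "z \<in> B" for z
    proof (rule ccontr)
      assume "z \<notin> {p, q}"
      then have "card {p, q, z} = 3"
        using q(2) by (auto simp: card_insert_if)
      moreover have "card {p, q, z} \<le> card B"
        using card_mono[OF assms(3)] p q that by simp
      ultimately show False
        using assms(4) by simp
    qed
    then show ?thesis
      using that q(1) by blast
  qed
  have "p \<in> X" "q \<in> X"
    using p q assms(2) by blast+
  moreover have "flat_hull X Ls B \<subseteq> lin Ls p q"
    using flat_hull_least[OF flat_lin[OF assms(1) \<open>p \<in> X\<close> \<open>q \<in> X\<close>]] pq
      left_in_lin[OF assms(1) \<open>p \<in> X\<close> \<open>q \<in> X\<close>] right_in_lin[OF assms(1) \<open>p \<in> X\<close> \<open>q \<in> X\<close>]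
    by blast
  ultimately show ?thesis
    using that by blast
qed

lemma plane_flat_hull_noncollinear:
  assumes lin: "liner X Ls" and X: "a \<in> X" "b \<in> X" "c \<in> X" and "a \<noteq> b" "c \<notin> lin Ls a b"
  shows "plane X Ls (flat_hull X Ls {a, b, c})"
proof -
  let ?P = "flat_hull X Ls {a, b, c}"
  have "card {a, b, c} \<le> 3"
    using card_length[of "[a, b, c]"] by simp
  then have "rank_le X Ls ?P 3"
    unfolding rank_le_def using X by (intro exI[of _ "{a, b, c}"] conjI) simp_all
  moreover have "\<not> rank_le X Ls ?P 2"
  proof
    assume "rank_le X Ls ?P 2"
    then obtain B where B: "B \<subseteq> X" "finite B" "card B \<le> 2" "?P \<subseteq> flat_hull X Ls B"
      unfolding rank_le_def by blast
    have abc: "{a, b, c} \<subseteq> flat_hull X Ls B"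
      using subset_flat_hull[of "{a, b, c}" X Ls] B(4) by blast
    have "B \<noteq> {}"
    proof
      assume "B = {}"
      then show False
        using abc flat_hull_empty[of X Ls] by simp
    qed
    then obtain p q where pq: "p \<in> X" "q \<in> X" "flat_hull X Ls B \<subseteq> lin Ls p q"
      using flat_hull_card_le_2[OF lin B(1-3)] by blast
    have ab: "a \<in> lin Ls p q" "b \<in> lin Ls p q"
      using abc pq(3) by blast+
    then have "p \<noteq> q"
      using \<open>a \<noteq> b\<close> by auto
    then have "lin Ls a b = lin Ls p q"
      using lin_eq_line[OF lin lin_in_lines[OF lin pq(1,2)] ab \<open>a \<noteq> b\<close>] by blast
    then show False
      using abc pq(3) \<open>c \<notin> lin Ls a b\<close> by blast
  qed
  ultimately show ?thesis
    unfolding plane_def using flat_flat_hull[OF lin] X by simp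
qed

lemma plane_flat: "plane X Ls P \<Longrightarrow> flat X Ls P"
  unfolding plane_def by blast

lemma plane_through_line_and_point:
  assumes lin: "liner X Ls" and "L \<in> Ls" "b \<in> X" "b \<notin> L"
  obtains P where "plane X Ls P" "L \<subseteq> P" "b \<in> P"
proof -
  obtain p q where pq: "p \<in> L" "q \<in> L" "p \<noteq> q"
    using liner_line[OF lin \<open>L \<in> Ls\<close>] by blast
  have L: "lin Ls p q = L"
    using lin_eq_line[OF lin \<open>L \<in> Ls\<close> pq] .
  have X: "p \<in> X" "q \<in> X"
    using pq liner_line_subset[OF lin \<open>L \<in> Ls\<close>] by blast+
  let ?P = "flat_hull X Ls {p, q, b}"
  have "plane X Ls ?P"
    using plane_flat_hull_noncollinear[OF lin X \<open>b \<in> X\<close> \<open>p \<noteq> q\<close>] L \<open>b \<notin> L\<close> by simp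
  moreover have "L \<subseteq> ?P"
  proof -
    have "{p, q, b} \<subseteq> X" "{p, q, b} \<subseteq> ?P"
      using X \<open>b \<in> X\<close> subset_flat_hull[of "{p, q, b}" X Ls] by blast+
    then show ?thesis
      using flat_lin_subset[OF flat_flat_hull[OF lin], of "{p, q, b}" p q] L by simp
  qed
  moreover have "b \<in> ?P"
    using subset_flat_hull[of "{p, q, b}" X Ls] by blast
  ultimately show ?thesis
    using that by blast
qed

section \<open>Pencils\<close>

definition pencil :: "'a set set \<Rightarrow> 'a set \<Rightarrow> 'a \<Rightarrow> 'a set set" where
  "pencil Ls P a = {N \<in> Ls. a \<in> N \<and> N \<subseteq> P}"

lemma finite_pencil: "finite P \<Longrightarrow> finite (pencil Ls P a)"
  unfolding pencil_def by (rule finite_subset[of _ "Pow P"]) auto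

lemma lin_inj_on_line:
  assumes lin: "liner X Ls" and L: "L \<in> Ls" and y: "y \<in> X" "y \<notin> L"
  shows "inj_on (lin Ls y) L"
proof (rule inj_onI)
  fix u v
  assume uv: "u \<in> L" "v \<in> L" "lin Ls y u = lin Ls y v"
  show "u = v"
  proof (rule ccontr)
    assume "u \<noteq> v"
    have X: "u \<in> X" "v \<in> X"
      using uv(1,2) liner_line_subset[OF lin L] by blast+
    have "y \<noteq> u"
      using uv(1) y(2) by blast
    have "lin Ls y u \<in> Ls" "u \<in> lin Ls y u" "v \<in> lin Ls y u"
      using lin_in_lines[OF lin y(1) X(1) \<open>y \<noteq> u\<close>] right_in_lin[OF lin y(1)] X uv(3) by auto
    then have "lin Ls y u = L"
      using liner_line_unique[OF lin _ L _ _ uv(1,2) \<open>u \<noteq> v\<close>] by blast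
    then show False
      using left_in_lin[OF lin y(1) X(1)] y(2) by simp
  qed
qed

lemma lin_image_subset_pencil:
  assumes lin: "liner X Ls" and P: "flat X Ls P" and L: "L \<subseteq> P" and y: "y \<in> P" "y \<notin> L"
  shows "lin Ls y ` L \<subseteq> pencil Ls P y"
proof
  fix N
  assume "N \<in> lin Ls y ` L"
  then obtain u where u: "u \<in> L" "N = lin Ls y u"
    by blast
  have X: "y \<in> X" "u \<in> X"
    using flat_subset[OF P] u(1) y(1) L by blast+
  have "y \<noteq> u"
    using u(1) y(2) by blast
  then show "N \<in> pencil Ls P y"
    unfolding pencil_def u(2)
    using lin_in_lines[OF lin X] left_in_lin[OF lin X] flat_lin_subset[OF P y(1)] u(1) L
    by blast
qed

lemma flat_Diff_eq_Union_pencil: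
  assumes lin: "liner X Ls" and P: "flat X Ls P" and a: "a \<in> P"
  shows "P - {a} = (\<Union>N\<in>pencil Ls P a. N - {a})"
proof
  show "P - {a} \<subseteq> (\<Union>N\<in>pencil Ls P a. N - {a})"
  proof
    fix z
    assume z: "z \<in> P - {a}"
    have X: "a \<in> X" "z \<in> X"
      using flat_subset[OF P] a z by blast+
    have "lin Ls a z \<in> pencil Ls P a"
      unfolding pencil_def using lin_in_lines[OF lin X] left_in_lin[OF lin X] flat_lin_subset[OF P a] z
      by blast
    then show "z \<in> (\<Union>N\<in>pencil Ls P a. N - {a})"
      using right_in_lin[OF lin X] z by blast
  qed
  show "(\<Union>N\<in>pencil Ls P a. N - {a}) \<subseteq> P - {a}"
    unfolding pencil_def by blast
qed

lemma pencil_disjoint: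
  assumes lin: "liner X Ls" and N: "N \<in> pencil Ls P a" and N': "N' \<in> pencil Ls P a" and "N \<noteq> N'"
  shows "(N - {a}) \<inter> (N' - {a}) = {}"
  using N N' \<open>N \<noteq> N'\<close> liner_line_unique[OF lin, of N N' a] unfolding pencil_def by blast

lemma card_flat_eq_pencil_sum:
  assumes lin: "liner X Ls" and P: "flat X Ls P" "finite P" and a: "a \<in> P"
  shows "card P = Suc (\<Sum>N\<in>pencil Ls P a. card N - 1)"
proof -
  have fin: "finite (pencil Ls P a)"
    using finite_pencil[OF P(2)] .
  have lines: "finite N" "a \<in> N" if "N \<in> pencil Ls P a" for N
    using that finite_subset P(2) unfolding pencil_def by auto
  have "card (P - {a}) = (\<Sum>N\<in>pencil Ls P a. card (N - {a}))"
    unfolding flat_Diff_eq_Union_pencil[OF lin P(1) a]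
    by (rule card_UN_disjoint[OF fin]) (use lines pencil_disjoint[OF lin] in auto)
  also have "\<dots> = (\<Sum>N\<in>pencil Ls P a. card N - 1)"
    using lines by (intro sum.cong) auto
  finally show ?thesis
    using card_Suc_Diff1[OF P(2) a] by simp
qed

lemma pencil_eq_lin_image:
  assumes lin: "liner X Ls" and P: "flat X Ls P" and L: "L \<in> Ls" "L \<subseteq> P" and y: "y \<in> P" "y \<notin> L"
    and meets: "\<And>N. N \<in> pencil Ls P y \<Longrightarrow> N \<inter> L \<noteq> {}"
  shows "pencil Ls P y = lin Ls y ` L"
proof
  show "lin Ls y ` L \<subseteq> pencil Ls P y"
    using lin_image_subset_pencil[OF lin P L(2) y] .
  show "pencil Ls P y \<subseteq> lin Ls y ` L"
  proof
    fix N
    assume N: "N \<in> pencil Ls P y"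
    then obtain u where u: "u \<in> N" "u \<in> L"
      using meets by blast
    have "N \<in> Ls" "y \<in> N"
      using N unfolding pencil_def by blast+
    then have "lin Ls y u = N"
      using lin_eq_line[OF lin _ _ u(1)] u(2) y(2) by blast
    then show "N \<in> lin Ls y ` L"
      using u(2) by blast
  qed
qed

lemma card_flat_eq_lin_sum:
  assumes lin: "liner X Ls" and P: "flat X Ls P" "finite P" and L: "L \<in> Ls" "L \<subseteq> P"
    and y: "y \<in> P" "y \<notin> L" and meets: "\<And>N. N \<in> pencil Ls P y \<Longrightarrow> N \<inter> L \<noteq> {}"
  shows "card P = Suc (\<Sum>u\<in>L. card (lin Ls y u) - 1)"
proof -
  have "inj_on (lin Ls y) L"
    using lin_inj_on_line[OF lin L(1) _ y(2)] flat_subset[OF P(1)] y(1) by blast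
  then show ?thesis
    using card_flat_eq_pencil_sum[OF lin P y(1)] pencil_eq_lin_image[OF lin P(1) L y meets]
    by (simp add: sum.reindex)
qed

lemma card_flat_pencil_uniform:
  assumes lin: "liner X Ls" and P: "flat X Ls P" "finite P" and L: "L \<in> Ls" "L \<subseteq> P" "a \<in> L"
    and uniform: "\<And>N. N \<in> pencil Ls P a - {L} \<Longrightarrow> card N = m"
  shows "card P = card L + card (pencil Ls P a - {L}) * (m - 1)"
proof -
  have "L \<in> pencil Ls P a"
    unfolding pencil_def using L by blast
  then have "card P = Suc (card L - 1 + (\<Sum>N\<in>pencil Ls P a - {L}. card N - 1))"
    using card_flat_eq_pencil_sum[OF lin P L(2)[THEN subsetD, OF L(3)]]
      sum.remove[where g = "\<lambda>N. card N - 1", OF finite_pencil[OF P(2)]] by simp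
  moreover have "card L \<noteq> 0"
    using finite_subset[OF L(2) P(2)] L(3) by auto
  moreover have "(\<Sum>N\<in>pencil Ls P a - {L}. card N - 1) = card (pencil Ls P a - {L}) * (m - 1)"
    using uniform by simp
  ultimately show ?thesis
    by simp
qed

section \<open>Meeting lines\<close>

lemma central_projection_lepoll:
  assumes lin: "liner X Ls" and L: "L \<in> Ls" and K: "K \<in> Ls" and p: "p \<in> X" "p \<notin> L" "p \<notin> K"
    and meets: "\<And>v. v \<in> L - {u} \<Longrightarrow> lin Ls v p \<inter> K \<noteq> {}"
  shows "L \<lesssim> K <+> (UNIV :: unit set)"
proof -
  define f where "f v = (SOME z. z \<in> lin Ls p v \<inter> K)" for v
  have f: "f v \<in> lin Ls p v \<inter> K" if "v \<in> L - {u}" for v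
  proof -
    have "\<exists>z. z \<in> lin Ls p v \<inter> K"
      using meets[OF that] lin_commute[of Ls p v] by auto
    then show ?thesis
      unfolding f_def by (rule someI_ex)
  qed
  have "inj_on f (L - {u})"
  proof (rule inj_onI)
    fix v w
    assume vw: "v \<in> L - {u}" "w \<in> L - {u}" "f v = f w"
    have X: "v \<in> X" "w \<in> X"
      using vw(1,2) liner_line_subset[OF lin L] by blast+
    have "p \<noteq> v" "p \<noteq> w" "p \<noteq> f v"
      using vw(1,2) p f[OF vw(1)] by auto
    moreover have "p \<in> lin Ls p v" "p \<in> lin Ls p w" "f v \<in> lin Ls p v" "f v \<in> lin Ls p w"
      using left_in_lin[OF lin p(1)] X f[OF vw(1)] f[OF vw(2)] vw(3) by auto
    ultimately have "lin Ls p v = lin Ls p w"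
      using liner_line_unique[OF lin lin_in_lines[OF lin p(1) X(1)] lin_in_lines[OF lin p(1) X(2)]]
      by blast
    then show "v = w"
      using inj_onD[OF lin_inj_on_line[OF lin L p(1,2)]] vw(1,2) by blast
  qed
  moreover have "f ` (L - {u}) \<subseteq> K"
    using f by blast
  ultimately show ?thesis
    by (rule lepoll_Plus_unit_if_inj_on_Diff)
qed

lemma meeting_lines_outside_point:
  assumes lin: "liner X Ls" and tl: "three_long Ls" and L: "L \<in> Ls" and K: "K \<in> Ls"
    and "L \<noteq> K" "c \<in> L" "c \<in> K"
  obtains x y p where "x \<in> K" "x \<noteq> c" "x \<notin> L" "y \<in> L" "y \<noteq> c" "y \<notin> K"
    "p \<in> lin Ls x y" "p \<in> X" "p \<notin> L" "p \<notin> K"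
proof -
  obtain y where y: "y \<in> L" "y \<noteq> c"
    using liner_line_other_point[OF lin L] by blast
  obtain x where x: "x \<in> K" "x \<noteq> c"
    using liner_line_other_point[OF lin K] by blast
  have "y \<notin> K" "x \<notin> L"
    using liner_line_unique[OF lin L K] \<open>L \<noteq> K\<close> \<open>c \<in> L\<close> \<open>c \<in> K\<close> x y by metis+
  have X: "x \<in> X" "y \<in> X"
    using x(1) y(1) liner_line_subset[OF lin] L K by blast+
  have "x \<noteq> y"
    using x(1) \<open>y \<notin> K\<close> by blast
  then have xy: "lin Ls x y \<in> Ls" "x \<in> lin Ls x y" "y \<in> lin Ls x y"
    using lin_in_lines[OF lin X] left_in_lin[OF lin X] right_in_lin[OF lin X] by blast+
  obtain p where p: "p \<in> lin Ls x y" "p \<noteq> x" "p \<noteq> y"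
    using three_long_other_point[OF tl xy(1)] by blast
  have "p \<notin> K"
    using liner_line_unique[OF lin xy(1) K p(1) xy(2) _ x(1) p(2)] xy(3) \<open>y \<notin> K\<close> by blast
  moreover have "p \<notin> L"
    using liner_line_unique[OF lin xy(1) L p(1) xy(3) _ y(1) p(3)] xy(2) \<open>x \<notin> L\<close> by blast
  moreover have "p \<in> X"
    using p(1) liner_line_subset[OF lin xy(1)] by blast
  ultimately show ?thesis
    using that x y \<open>y \<notin> K\<close> \<open>x \<notin> L\<close> p(1) by blast
qed

lemma proaffine_meeting_lines_lepoll:
  assumes lin: "liner X Ls" and tl: "three_long Ls" and pa: "proaffine X Ls"
    and L: "L \<in> Ls" and K: "K \<in> Ls" and "L \<inter> K \<noteq> {}"
  shows "L \<lesssim> K <+> (UNIV :: unit set)"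
proof (cases "L = K")
  case True
  then show ?thesis
    by (simp add: lepoll_Plus)
next
  case False
  obtain c where c: "c \<in> L" "c \<in> K"
    using \<open>L \<inter> K \<noteq> {}\<close> by blast
  obtain x y p where xyp: "x \<in> K" "x \<noteq> c" "y \<in> L" "y \<noteq> c"
    "p \<in> lin Ls x y" "p \<in> X" "p \<notin> L" "p \<notin> K"
    using meeting_lines_outside_point[OF lin tl L K False c] by blast
  have X: "c \<in> X" "x \<in> X" "y \<in> X"
    using c xyp(1,3) liner_line_subset[OF lin] L K by blast+
  have "lin Ls c x = K" "lin Ls c y = L"
    using lin_eq_line[OF lin K c(2) xyp(1)] lin_eq_line[OF lin L c(1) xyp(3)] xyp(2,4) by auto
  moreover have "\<forall>w\<in>X. \<forall>x\<in>X. \<forall>y\<in>X. \<forall>p \<in> lin Ls x y - lin Ls w x.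
      \<exists>u \<in> lin Ls w y. \<forall>v \<in> lin Ls w y - {u}. lin Ls v p \<inter> lin Ls w x \<noteq> {}"
    using pa unfolding proaffine_def .
  ultimately obtain u where "\<forall>v \<in> L - {u}. lin Ls v p \<inter> K \<noteq> {}"
    using X xyp(5,8) by (metis DiffI)
  then show ?thesis
    using central_projection_lepoll[OF lin L K xyp(6-8)] by blast
qed

lemma proclus_parallel_unique:
  assumes pc: "proclus X Ls" and P: "plane X Ls P" and K: "K \<in> Ls" "K \<subseteq> P" and z: "z \<in> P" "z \<notin> K"
    and N: "N \<in> pencil Ls P z" "N \<inter> K = {}" and N': "N' \<in> pencil Ls P z" "N' \<inter> K = {}"
  shows "N = N'"
proof -
  have parallels: "\<forall>P L x. plane X Ls P \<and> L \<in> Ls \<and> L \<subseteq> P \<and> x \<in> P - L \<longrightarrow>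
      (\<forall>M1 M2. M1 \<in> Ls \<and> x \<in> M1 \<and> M1 \<subseteq> P - L \<and> M2 \<in> Ls \<and> x \<in> M2 \<and> M2 \<subseteq> P - L
                 \<longrightarrow> M1 = M2)"
    using pc unfolding proclus_def .
  have "plane X Ls P \<and> K \<in> Ls \<and> K \<subseteq> P \<and> z \<in> P - K"
    using P K z by blast
  moreover have "N \<in> Ls \<and> z \<in> N \<and> N \<subseteq> P - K \<and> N' \<in> Ls \<and> z \<in> N' \<and> N' \<subseteq> P - K"
    using N N' unfolding pencil_def by blast
  ultimately show ?thesis
    using parallels[rule_format] by blast
qed

lemma proclus_pencil_lepoll:
  assumes lin: "liner X Ls" and pc: "proclus X Ls" and P: "plane X Ls P"
    and K: "K \<in> Ls" "K \<subseteq> P" and z: "z \<in> P" "z \<notin> K"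
  shows "pencil Ls P z \<lesssim> K <+> (UNIV :: unit set)"
proof -
  define g where "g N = (if N \<inter> K = {} then Inr () else Inl (SOME w. w \<in> N \<inter> K))" for N
  have g_meet: "(SOME w. w \<in> N \<inter> K) \<in> N \<inter> K" if "N \<inter> K \<noteq> {}" for N
    using that some_in_eq[of "N \<inter> K"] by blast
  have "inj_on g (pencil Ls P z)"
  proof (rule inj_onI)
    fix N N'
    assume N: "N \<in> pencil Ls P z" "N' \<in> pencil Ls P z" "g N = g N'"
    show "N = N'"
    proof (cases "N \<inter> K = {}")
      case True
      then have "N' \<inter> K = {}"
        using N(3) unfolding g_def by (auto split: if_splits)
      then show ?thesis
        using proclus_parallel_unique[OF pc P K z N(1) True N(2)] by blast
    next
      case False
      then have "N' \<inter> K \<noteq> {}" and w: "(SOME w. w \<in> N \<inter> K) = (SOME w. w \<in> N' \<inter> K)"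
        using N(3) unfolding g_def by (auto split: if_splits)
      then show ?thesis
        using g_meet[OF False] g_meet[of N'] w z(2) N(1,2)
          liner_line_unique[OF lin, of N N' z "SOME w. w \<in> N \<inter> K"]
        unfolding pencil_def by auto
    qed
  qed
  moreover have "g ` pencil Ls P z \<subseteq> K <+> UNIV"
    using g_meet unfolding g_def by auto
  ultimately show ?thesis
    unfolding lepoll_def by blast
qed

lemma proclus_coplanar_lepoll:
  assumes lin: "liner X Ls" and pc: "proclus X Ls" and P: "plane X Ls P"
    and L: "L \<in> Ls" "L \<subseteq> P" and K: "K \<in> Ls" "K \<subseteq> P" and b: "b \<in> P" "b \<notin> L" "b \<notin> K"
  shows "L \<lesssim> K <+> (UNIV :: unit set)"
proof -
  have flat: "flat X Ls P"
    using plane_flat[OF P] .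
  have "b \<in> X"
    using flat_subset[OF flat] b(1) by blast
  then have "L \<approx> lin Ls b ` L"
    using eqpoll_sym inj_on_image_eqpoll_self lin_inj_on_line[OF lin L(1) _ b(2)] by blast
  also have "lin Ls b ` L \<lesssim> pencil Ls P b"
    using lin_image_subset_pencil[OF lin flat L(2) b(1,2)] by (rule subset_imp_lepoll)
  also have "\<dots> \<lesssim> K <+> (UNIV :: unit set)"
    using proclus_pencil_lepoll[OF lin pc P K b(1,3)] .
  finally show ?thesis .
qed

lemma proclus_coplanar_card_le:
  assumes lin: "liner X Ls" and pc: "proclus X Ls" and P: "plane X Ls P"
    and L: "L \<in> Ls" "L \<subseteq> P" and K: "K \<in> Ls" "K \<subseteq> P" "finite K" and b: "b \<in> P" "b \<notin> L" "b \<notin> K"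
  shows "card L \<le> card K + 1"
  using proclus_coplanar_lepoll[OF lin pc P L K(1,2) b] lepoll_Plus_unit_iff_card[OF K(3), of L]
  by simp

lemma proclus_meeting_lines_lepoll:
  assumes lin: "liner X Ls" and tl: "three_long Ls" and pc: "proclus X Ls"
    and L: "L \<in> Ls" and K: "K \<in> Ls" and "L \<inter> K \<noteq> {}"
  shows "L \<lesssim> K <+> (UNIV :: unit set)"
proof (cases "L = K")
  case True
  then show ?thesis
    by (simp add: lepoll_Plus)
next
  case False
  obtain c where c: "c \<in> L" "c \<in> K"
    using \<open>L \<inter> K \<noteq> {}\<close> by blast
  obtain x y p where xyp: "x \<in> K" "x \<noteq> c" "x \<notin> L" "y \<in> L"
    "p \<in> lin Ls x y" "p \<in> X" "p \<notin> L" "p \<notin> K"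
    using meeting_lines_outside_point[OF lin tl L K False c] by blast
  have X: "c \<in> X" "x \<in> X"
    using c xyp(1) liner_line_subset[OF lin] L K by blast+
  obtain P where P: "plane X Ls P" "L \<subseteq> P" "x \<in> P"
    using plane_through_line_and_point[OF lin L X(2) xyp(3)] by blast
  have flat: "flat X Ls P"
    using plane_flat[OF P(1)] .
  have "K \<subseteq> P"
    using flat_lin_subset[OF flat _ P(3), of c] lin_eq_line[OF lin K c(2) xyp(1) xyp(2)[symmetric]] c(1) P(2) by auto
  moreover have "p \<in> P"
    using flat_lin_subset[OF flat P(3), of y] xyp(4,5) P(2) by blast
  ultimately show ?thesis
    using proclus_coplanar_lepoll[OF lin pc P(1) L P(2) K] xyp(7,8) by blast
qed

lemma lepoll_Plus_bool_via_transversal: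
  assumes lin: "liner X Ls"
    and meeting: "\<And>L K. L \<in> Ls \<Longrightarrow> K \<in> Ls \<Longrightarrow> L \<inter> K \<noteq> {} \<Longrightarrow> L \<lesssim> K <+> (UNIV :: unit set)"
    and L: "L \<in> Ls" and K: "K \<in> Ls"
  shows "L \<lesssim> K <+> (UNIV :: bool set)"
proof (cases "L \<inter> K = {}")
  case False
  then show ?thesis
    using lepoll_Plus_unit_Plus_bool meeting[OF L K] by blast
next
  case True
  obtain a b where ab: "a \<in> L" "b \<in> K"
    using liner_line[OF lin L] liner_line[OF lin K] by blast
  have X: "a \<in> X" "b \<in> X"
    using ab liner_line_subset[OF lin] L K by blast+
  have "a \<noteq> b"
    using ab True by blast
  then have M: "lin Ls a b \<in> Ls" "a \<in> lin Ls a b" "b \<in> lin Ls a b"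
    using lin_in_lines[OF lin X] left_in_lin[OF lin X] right_in_lin[OF lin X] by blast+
  have "L \<lesssim> lin Ls a b <+> (UNIV :: unit set)"
    using meeting[OF L M(1)] ab(1) M(2) by blast
  moreover have "lin Ls a b \<lesssim> K <+> (UNIV :: unit set)"
    using meeting[OF M(1) K] ab(2) M(3) by blast
  ultimately show ?thesis
    by (rule lepoll_Plus_unit_trans)
qed

section \<open>Disjoint lines in Proclus liners\<close>

lemma lin_avoiding_point:
  assumes lin: "liner X Ls" and L: "L \<in> Ls" and b: "b \<in> X" "b \<notin> L" and "y \<noteq> b"
  obtains a where "a \<in> L" "y \<notin> lin Ls b a"
proof -
  obtain a1 a2 where a: "a1 \<in> L" "a2 \<in> L" "a1 \<noteq> a2"
    using liner_line[OF lin L] by blast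
  have X: "a1 \<in> X" "a2 \<in> X"
    using a liner_line_subset[OF lin L] by blast+
  have "b \<noteq> a1" "b \<noteq> a2"
    using a b(2) by blast+
  then have "lin Ls b a1 \<noteq> lin Ls b a2"
    using inj_onD[OF lin_inj_on_line[OF lin L b]] a by blast
  then have "y \<notin> lin Ls b a1 \<or> y \<notin> lin Ls b a2"
    using liner_line_unique[OF lin lin_in_lines[OF lin b(1) X(1)] lin_in_lines[OF lin b(1) X(2)]]
      left_in_lin[OF lin b(1)] X \<open>y \<noteq> b\<close> \<open>b \<noteq> a1\<close> \<open>b \<noteq> a2\<close> by blast
  then show ?thesis
    using that a by blast
qed

lemma proclus_pencil_meets_longer_line:
  assumes lin: "liner X Ls" and pc: "proclus X Ls" and P: "plane X Ls P"
    and L: "L \<in> Ls" "L \<subseteq> P" and K: "K \<in> Ls" "K \<subseteq> P" "finite K" and shorter: "card K < card L"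
    and y: "y \<in> P" "y \<notin> L" "y \<notin> K" and N: "N \<in> pencil Ls P y"
  shows "N \<inter> L \<noteq> {}"
proof
  assume NL: "N \<inter> L = {}"
  have flat: "flat X Ls P"
    using plane_flat[OF P] .
  have "y \<in> X"
    using flat_subset[OF flat] y(1) by blast
  have "finite L"
    using shorter card.infinite by (metis not_less0)
  have "N \<notin> lin Ls y ` L"
  proof
    assume "N \<in> lin Ls y ` L"
    then obtain u where "u \<in> L" "N = lin Ls y u"
      by blast
    then show False
      using right_in_lin[OF lin \<open>y \<in> X\<close>] liner_line_subset[OF lin L(1)] NL by blast
  qed
  then have "card (insert N (lin Ls y ` L)) = card L + 1"
    using card_image[OF lin_inj_on_line[OF lin L(1) \<open>y \<in> X\<close> y(2)]] \<open>finite L\<close> by simp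
  moreover have "insert N (lin Ls y ` L) \<subseteq> pencil Ls P y"
    using lin_image_subset_pencil[OF lin flat L(2) y(1,2)] N by blast
  then have "insert N (lin Ls y ` L) \<lesssim> K <+> (UNIV :: unit set)"
    by (rule lepoll_trans[OF subset_imp_lepoll proclus_pencil_lepoll[OF lin pc P K(1,2) y(1,3)]])
  ultimately show False
    using lepoll_Plus_unit_iff_card[OF K(3), of "insert N (lin Ls y ` L)"] shorter by simp
qed

lemma proclus_lines_meet_line_if_short_pencil:
  assumes lin: "liner X Ls" and pc: "proclus X Ls" and P: "plane X Ls P"
    and L: "L \<in> Ls" "L \<subseteq> P" and b: "b \<in> P" "b \<notin> L"
    and shorter: "\<And>a. a \<in> L \<Longrightarrow> finite (lin Ls b a) \<and> card (lin Ls b a) < card L"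
    and y: "y \<in> P" "y \<notin> L" and N: "N \<in> pencil Ls P y"
  shows "N \<inter> L \<noteq> {}"
proof -
  have flat: "flat X Ls P"
    using plane_flat[OF P] .
  have "b \<in> X"
    using flat_subset[OF flat] b(1) by blast
  have off_b: "N' \<inter> L \<noteq> {}" if y': "y' \<in> P" "y' \<notin> L" "y' \<noteq> b" and N': "N' \<in> pencil Ls P y'"
    for y' N'
  proof -
    obtain a where a: "a \<in> L" "y' \<notin> lin Ls b a"
      using lin_avoiding_point[OF lin L(1) \<open>b \<in> X\<close> b(2) y'(3)] by blast
    have "a \<in> X" "b \<noteq> a"
      using flat_subset[OF flat] a(1) L(2) b(2) by blast+
    then have "lin Ls b a \<in> Ls" "lin Ls b a \<subseteq> P"
      using lin_in_lines[OF lin \<open>b \<in> X\<close>] flat_lin_subset[OF flat b(1)] a(1) L(2) by blast+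
    then show ?thesis
      using proclus_pencil_meets_longer_line[OF lin pc P L] shorter[OF a(1)] y' a(2) N' by blast
  qed
  show ?thesis
  proof (cases "y = b")
    case False
    then show ?thesis
      using off_b y N by blast
  next
    case True
    have "N \<in> Ls" "N \<subseteq> P"
      using N unfolding pencil_def by blast+
    obtain y' where y': "y' \<in> N" "y' \<noteq> b"
      using liner_line_other_point[OF lin \<open>N \<in> Ls\<close>] by blast
    show ?thesis
    proof (cases "y' \<in> L")
      case True
      then show ?thesis
        using y'(1) by blast
    next
      case False
      have "N \<in> pencil Ls P y'"
        using \<open>N \<in> Ls\<close> \<open>N \<subseteq> P\<close> y'(1) unfolding pencil_def by blast
      then show ?thesis
        using off_b[OF _ False y'(2)] y'(1) \<open>N \<subseteq> P\<close> by blast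
    qed
  qed
qed

lemma sum_eq_card_mult_lower_bound:
  fixes f :: "'a \<Rightarrow> nat"
  assumes "finite A" "\<And>x. x \<in> A \<Longrightarrow> c \<le> f x" "sum f A = card A * c" "x \<in> A"
  shows "f x = c"
proof (rule ccontr)
  assume "f x \<noteq> c"
  then have "c < f x"
    using assms(2)[OF assms(4)] by simp
  then have "(\<Sum>x\<in>A. c) < sum f A"
    using assms(2,4) by (intro sum_strict_mono_ex1[OF assms(1)]) auto
  then show False
    using assms(3) by simp
qed

lemma Suc_mult_pred_neq_add_mult_pred:
  fixes n k :: nat
  assumes "3 \<le> n"
  shows "Suc n * (n - 1) \<noteq> n + k * (n - 1)"
proof
  assume eq: "Suc n * (n - 1) = n + k * (n - 1)"
  obtain m where n: "n = Suc m" and "2 \<le> m"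
    using assms by (cases n) auto
  then have eq': "m * m + m = Suc (k * m)"
    using eq by (simp add: algebra_simps)
  show False
  proof (cases "k \<le> m")
    case True
    then have "k * m \<le> m * m"
      by (rule mult_le_mono1)
    then show False
      using eq' \<open>2 \<le> m\<close> by linarith
  next
    case False
    then have "Suc m * m \<le> k * m"
      by (intro mult_le_mono1) simp
    then show False
      using eq' by simp
  qed
qed

lemma proclus_plane_one_shorter_pencil:
  assumes lin: "liner X Ls" and pc: "proclus X Ls" and P: "plane X Ls P"
    and L: "L \<in> Ls" "L \<subseteq> P" "finite L" "card L = Suc n" and b: "b \<in> P" "b \<notin> L"
    and short: "\<And>a. a \<in> L \<Longrightarrow> card (lin Ls b a) = n"
  shows "finite P" and "card P = Suc (Suc n * (n - 1))"
    and "\<And>y u. y \<in> P \<Longrightarrow> y \<notin> L \<Longrightarrow> u \<in> L \<Longrightarrow> card (lin Ls y u) = n"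
proof -
  have flat: "flat X Ls P"
    using plane_flat[OF P] .
  have "1 \<le> n"
    using liner_card_line_ge_2[OF lin L(1,3)] L(4) by simp
  have fin_b: "finite (lin Ls b a)" if "a \<in> L" for a
    using short[OF that] \<open>1 \<le> n\<close> card.infinite by fastforce
  have meets: "N \<inter> L \<noteq> {}" if "y \<in> P" "y \<notin> L" "N \<in> pencil Ls P y" for y N
    using proclus_lines_meet_line_if_short_pencil[OF lin pc P L(1,2) b _ that] fin_b short L(4) by simp
  have "P - {b} = (\<Union>N\<in>lin Ls b ` L. N - {b})"
    using flat_Diff_eq_Union_pencil[OF lin flat b(1)] pencil_eq_lin_image[OF lin flat L(1,2) b meets[OF b]]
    by simp
  then have "finite (P - {b})"
    using L(3) fin_b by auto
  then show "finite P"
    by simp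
  then show card_P: "card P = Suc (Suc n * (n - 1))"
    using card_flat_eq_lin_sum[OF lin flat _ L(1,2) b meets[OF b]] short L(4) by simp
  have lower: "n \<le> card (lin Ls y u)" if y: "y \<in> P" "y \<notin> L" and u: "u \<in> L" for y u
  proof -
    have X: "y \<in> X" "u \<in> X"
      using flat_subset[OF flat] y(1) u L(2) by blast+
    have "y \<noteq> u"
      using y(2) u by blast
    then have M: "lin Ls y u \<in> Ls" "u \<in> lin Ls y u" "lin Ls y u \<subseteq> P"
      using lin_in_lines[OF lin X] right_in_lin[OF lin X] flat_lin_subset[OF flat y(1)] u L(2)
      by blast+
    show ?thesis
    proof (cases "b \<in> lin Ls y u")
      case True
      then have "lin Ls b u = lin Ls y u"
        using lin_eq_line[OF lin M(1) True M(2)] b(2) u by blast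
      then show ?thesis
        using short[OF u] by simp
    next
      case False
      have "finite (lin Ls y u)"
        using M(3) \<open>finite P\<close> finite_subset by blast
      then show ?thesis
        using proclus_coplanar_card_le[OF lin pc P L(1,2) M(1,3) _ b False] L(4) by simp
    qed
  qed
  show "card (lin Ls y u) = n" if y: "y \<in> P" "y \<notin> L" and u: "u \<in> L" for y u
  proof -
    have sum: "(\<Sum>v\<in>L. card (lin Ls y v) - 1) = card L * (n - 1)"
      using card_flat_eq_lin_sum[OF lin flat \<open>finite P\<close> L(1,2) y meets[OF y]] card_P L(4) by simp
    have bound: "n - 1 \<le> card (lin Ls y v) - 1" if "v \<in> L" for v
      using lower[OF y that] by (rule diff_le_mono)
    have "card (lin Ls y u) - 1 = n - 1"
      using sum_eq_card_mult_lower_bound[where f = "\<lambda>v. card (lin Ls y v) - 1", OF L(3) bound sum u] .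
    then show ?thesis
      using lower[OF y u] \<open>1 \<le> n\<close> by linarith
  qed
qed

lemma proclus_plane_lin_not_all_one_shorter:
  assumes lin: "liner X Ls" and pc: "proclus X Ls" and P: "plane X Ls P"
    and L: "L \<in> Ls" "L \<subseteq> P" "finite L" "4 \<le> card L" and b: "b \<in> P" "b \<notin> L"
  shows "\<exists>a\<in>L. card (lin Ls b a) \<noteq> card L - 1"
proof (rule ccontr)
  define n where "n = card L - 1"
  assume "\<not> ?thesis"
  then have short: "card (lin Ls b a) = n" if "a \<in> L" for a
    using that unfolding n_def by blast
  have card_L: "card L = Suc n" and "3 \<le> n"
    using L(4) unfolding n_def by auto
  note counts = proclus_plane_one_shorter_pencil[OF lin pc P L(1-3) card_L b short]
  have flat: "flat X Ls P"
    using plane_flat[OF P] .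
  obtain a where a: "a \<in> L"
    using liner_line[OF lin L(1)] by blast
  have "card N = n" if N: "N \<in> pencil Ls P a - {L}" for N
  proof -
    have N': "N \<in> Ls" "a \<in> N" "N \<subseteq> P" "N \<noteq> L"
      using N unfolding pencil_def by blast+
    obtain y where y: "y \<in> N" "y \<noteq> a"
      using liner_line_other_point[OF lin N'(1)] by blast
    have "y \<notin> L"
      using liner_line_unique[OF lin N'(1) L(1) N'(2) y(1) a] y(2) N'(4) by blast
    moreover have "lin Ls y a = N"
      using lin_eq_line[OF lin N'(1) y(1) N'(2) y(2)] .
    ultimately show ?thesis
      using counts(3)[of y a] y(1) N'(3) a by blast
  qed
  then have "card P = Suc n + card (pencil Ls P a - {L}) * (n - 1)"
    using card_flat_pencil_uniform[OF lin flat counts(1) L(1,2) a] card_L by simp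
  then show False
    using counts(2) Suc_mult_pred_neq_add_mult_pred[OF \<open>3 \<le> n\<close>, of "card (pencil Ls P a - {L})"]
    by simp
qed

lemma proclus_finite_line_lepoll_lin:
  assumes lin: "liner X Ls" and tl: "three_long Ls" and pc: "proclus X Ls"
    and L: "L \<in> Ls" "finite L" and b: "b \<in> X" "b \<notin> L"
  shows "\<exists>a\<in>L. L \<lesssim> lin Ls b a"
proof (rule ccontr)
  assume "\<not> ?thesis"
  then have longer: "\<not> L \<lesssim> lin Ls b a" if "a \<in> L" for a
    using that by blast
  have one_shorter: "card (lin Ls b a) = card L - 1" and long: "3 \<le> card (lin Ls b a)"
    if a: "a \<in> L" for a
  proof -
    have X: "a \<in> X"
      using a liner_line_subset[OF lin L(1)] by blast
    have "b \<noteq> a"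
      using a b(2) by blast
    then have M: "lin Ls b a \<in> Ls" "a \<in> lin Ls b a"
      using lin_in_lines[OF lin b(1) X] right_in_lin[OF lin b(1) X] by blast+
    have fin: "finite (lin Ls b a)"
      using longer[OF a] finite_lepoll_infinite[OF _ L(2)] by blast
    then have "card (lin Ls b a) < card L"
      using longer[OF a] lepoll_iff_card_le[OF L(2)] by fastforce
    moreover have "L \<lesssim> lin Ls b a <+> (UNIV :: unit set)"
      using proclus_meeting_lines_lepoll[OF lin tl pc L(1) M(1)] a M(2) by blast
    then have "card L \<le> card (lin Ls b a) + 1"
      using lepoll_Plus_unit_iff_card[OF fin] by blast
    ultimately show "card (lin Ls b a) = card L - 1"
      by linarith
    show "3 \<le> card (lin Ls b a)"
      using three_long_card[OF tl M(1) fin] .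
  qed
  obtain a where "a \<in> L"
    using liner_line[OF lin L(1)] by blast
  then have "4 \<le> card L"
    using one_shorter long by fastforce
  obtain P where "plane X Ls P" "L \<subseteq> P" "b \<in> P"
    using plane_through_line_and_point[OF lin L(1) b] by blast
  then show False
    using proclus_plane_lin_not_all_one_shorter[OF lin pc _ L(1) _ L(2) \<open>4 \<le> card L\<close> _ b(2)]
      one_shorter by blast
qed

lemma proclus_lines_lepoll:
  assumes lin: "liner X Ls" and tl: "three_long Ls" and pc: "proclus X Ls"
    and L: "L \<in> Ls" and K: "K \<in> Ls"
  shows "L \<lesssim> K <+> (UNIV :: unit set)"
proof (cases "L \<inter> K = {}")
  case False
  then show ?thesis
    using proclus_meeting_lines_lepoll[OF lin tl pc L K] by blast
next
  case disjoint: True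
  have L_K: "L \<lesssim> K <+> (UNIV :: bool set)"
    using lepoll_Plus_bool_via_transversal[OF lin proclus_meeting_lines_lepoll[OF lin tl pc] L K] .
  show ?thesis
  proof (cases "finite K")
    case False
    then show ?thesis
      using lepoll_trans[OF L_K infinite_Plus_bool_lepoll_Plus_unit] by blast
  next
    case True
    have "finite L"
      using L_K True unfolding lepoll_def by (metis finite_Plus finite_UNIV finite_imageD finite_subset)
    obtain b where b: "b \<in> K"
      using liner_line[OF lin K] by blast
    then have "b \<in> X" "b \<notin> L"
      using liner_line_subset[OF lin K] disjoint by blast+
    then obtain a where a: "a \<in> L" and L_lin: "L \<lesssim> lin Ls b a"
      using proclus_finite_line_lepoll_lin[OF lin tl pc L \<open>finite L\<close>] by blast
    have "lin Ls b a \<lesssim> K <+> (UNIV :: unit set)"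
    proof -
      have X: "a \<in> X"
        using a liner_line_subset[OF lin L] by blast
      have "b \<noteq> a"
        using a \<open>b \<notin> L\<close> by blast
      then show ?thesis
        using proclus_meeting_lines_lepoll[OF lin tl pc lin_in_lines[OF lin \<open>b \<in> X\<close> X] K]
          left_in_lin[OF lin \<open>b \<in> X\<close> X] b by blast
    qed
    with L_lin show ?thesis
      by (rule lepoll_trans)
  qed
qed

theorem corollary3p3p26:
  fixes X :: "'a set" and Ls :: "'a set set"
  assumes "liner X Ls" and "three_long Ls"
  shows "(proaffine X Ls \<longrightarrow> (\<forall>L\<in>Ls. \<forall>M\<in>Ls. L \<lesssim> M <+> (UNIV :: bool set))) \<and>
         (proclus X Ls \<longrightarrow> (\<forall>L\<in>Ls. \<forall>M\<in>Ls. L \<lesssim> M <+> (UNIV :: unit set)))"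
proof (intro conjI impI ballI)
  fix L M
  assume "proaffine X Ls" "L \<in> Ls" "M \<in> Ls"
  then show "L \<lesssim> M <+> (UNIV :: bool set)"
    using lepoll_Plus_bool_via_transversal[OF assms(1) proaffine_meeting_lines_lepoll[OF assms]]
    by blast
next
  fix L M
  assume "proclus X Ls" "L \<in> Ls" "M \<in> Ls"
  then show "L \<lesssim> M <+> (UNIV :: unit set)"
    using proclus_lines_lepoll[OF assms] by blast
qed

end
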